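(* Let $s$ be a positive integer with $s\equiv 2\pmod 3$. Then $s(3s-1)\neq (mk^{2}-(m-2)k)p$ for all positive integers $m,k$ with $m\not\equiv 0\pmod 3$ and all primes $p\equiv 1\pmod 3$. *)

theory Defs
  imports "HOL-Computational_Algebra.Primes"
begin

end

theory Submission
  imports Defs "HOL-Number_Theory.Cong"
begin

(* Reduce modulo 3: the left-hand side is congruent to 2 * (3 * 2 - 1), i.e. to 1, whereas
   the right-hand side is congruent to m k^2 - (m - 2) k, which is never 1 modulo 3 when
   3 does not divide m. *)

lemma double_pentagonal_mod_3_eq_1:
  fixes s :: int
  assumes "s mod 3 = 2"
  shows "s * (3 * s - 1) mod 3 = 1"
proof -
  have "[s * (3 * s - 1) = 2 * (3 * 2 - 1)] (mod 3)"
    using assms by (intro cong_mult cong_diff) (simp_all add: cong_def)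
  then show ?thesis
    by (simp add: cong_def)
qed

lemma polygonal_factor_mod_3_ne_1:
  fixes m k :: int
  assumes "m mod 3 \<noteq> 0"
  shows "(m * k^2 - (m - 2) * k) mod 3 \<noteq> 1"
proof -
  have "[m * k^2 - (m - 2) * k
      = (m mod 3) * (k mod 3)^2 - (m mod 3 - 2) * (k mod 3)] (mod 3)"
    by (intro cong_diff cong_mult cong_pow) (simp_all add: cong_def)
  moreover have "m mod 3 \<in> {1, 2}" and "k mod 3 \<in> {0, 1, 2}"
    using assms by auto
  ultimately show ?thesis
    by (auto simp: cong_def power2_eq_square)
qed

lemma mult_mod_eq_self_if_mod_eq_1:
  fixes x p n :: "'a::euclidean_semiring_cancel"
  assumes "p mod n = 1"
  shows "x * p mod n = x mod n"
  by (metis assms mod_mult_right_eq mult.right_neutral)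

theorem lemma2p4:
  fixes s m k p :: int
  assumes "s > 0" and "s mod 3 = 2"
    and "m > 0" and "k > 0" and "m mod 3 \<noteq> 0"
    and "prime p" and "p mod 3 = 1"
  shows "s * (3 * s - 1) \<noteq> (m * k^2 - (m - 2) * k) * p"
proof
  assume "s * (3 * s - 1) = (m * k^2 - (m - 2) * k) * p"
  then have "(m * k^2 - (m - 2) * k) mod 3 = 1"
    using double_pentagonal_mod_3_eq_1[OF \<open>s mod 3 = 2\<close>] mult_mod_eq_self_if_mod_eq_1[OF \<open>p mod 3 = 1\<close>]
    by simp
  with polygonal_factor_mod_3_ne_1[OF \<open>m mod 3 \<noteq> 0\<close>] show False ..
qed

end
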